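(* Let $\mathcal{G}=(\mathcal{V},\mathcal{E})$ be a directed graph and $f:2^{\mathcal{E}}\to\mathbb{R}_+$ a normalized, nonnegative, monotone nondecreasing submodular function, and define the node function $h:2^{\mathcal{V}}\to\mathbb{R}_+$ by $h(X)=f(\delta^+(X))$. Then: (1) $h$ is not always submodular, i.e., there exist such $\mathcal{G}$ and $f$ for which $h$ is not submodular; (2) $h$ is always subadditive: $h(A)+h(B)\ge h(A\cup B)$ for all $A,B\subseteq\mathcal{V}$.
   Context: For $X\subseteq\mathcal{V}$, $\delta^+(X)=\{(v,u)\in\mathcal{E}: v\in X,\ u\notin X\}$ is the set of edges leaving $X$. A set function $f$ is normalized if $f(\emptyset)=0$, monotone nondecreasing if $A\subseteq B$ implies $f(A)\le f(B)$, and submodular if $f(A)+f(B)\ge f(A\cup B)+f(A\cap B)$ for all $A,B$. *)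

theory Defs
  imports Main "HOL.Real"
begin

definition digraph :: "'v set \<Rightarrow> ('v \<times> 'v) set \<Rightarrow> bool" where
  "digraph V E \<longleftrightarrow> E \<subseteq> V \<times> V"

definition out_edges :: "('v \<times> 'v) set \<Rightarrow> 'v set \<Rightarrow> ('v \<times> 'v) set" where
  "out_edges E X = {(v, u) \<in> E. v \<in> X \<and> u \<notin> X}"

definition normalized_on :: "'a set \<Rightarrow> ('a set \<Rightarrow> real) \<Rightarrow> bool" where
  "normalized_on S f \<longleftrightarrow> f {} = 0"

definition nonneg_on :: "'a set \<Rightarrow> ('a set \<Rightarrow> real) \<Rightarrow> bool" where
  "nonneg_on S f \<longleftrightarrow> (\<forall>A. A \<subseteq> S \<longrightarrow> 0 \<le> f A)"

definition monotone_setfun_on :: "'a set \<Rightarrow> ('a set \<Rightarrow> real) \<Rightarrow> bool" where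
  "monotone_setfun_on S f \<longleftrightarrow> (\<forall>A B. A \<subseteq> B \<and> B \<subseteq> S \<longrightarrow> f A \<le> f B)"

definition submodular_on :: "'a set \<Rightarrow> ('a set \<Rightarrow> real) \<Rightarrow> bool" where
  "submodular_on S f \<longleftrightarrow>
     (\<forall>A B. A \<subseteq> S \<and> B \<subseteq> S \<longrightarrow> f A + f B \<ge> f (A \<union> B) + f (A \<inter> B))"

definition node_fun :: "('v \<times> 'v) set \<Rightarrow> (('v \<times> 'v) set \<Rightarrow> real) \<Rightarrow> 'v set \<Rightarrow> real" where
  "node_fun E f X = f (out_edges E X)"

end

theory Submission
  imports Defs
begin

text \<open>Every edge leaving \<open>A \<union> B\<close> leaves \<open>A\<close> or \<open>B\<close>, so subadditivity of \<open>h\<close> follows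
  from monotonicity of \<open>f\<close> together with its subadditivity, which is submodularity plus
  nonnegativity on the intersection. Submodularity of \<open>h\<close> fails already for two disjoint
  edges \<open>0 \<rightarrow> 1\<close>, \<open>2 \<rightarrow> 3\<close> and the submodular \<open>f\<close> that is \<open>1\<close> on every nonempty edge set:
  with \<open>A = {0,1}\<close>, \<open>B = {0,2}\<close> one gets \<open>h A + h B = 1 < 2 = h (A \<union> B) + h (A \<inter> B)\<close>.\<close>

lemma out_edges_subset: "out_edges E X \<subseteq> E"
  by (auto simp: out_edges_def)

lemma out_edges_Un_subset: "out_edges E (A \<union> B) \<subseteq> out_edges E A \<union> out_edges E B"
  by (auto simp: out_edges_def)

lemma submodular_nonneg_subadditive:
  assumes "submodular_on S f" "nonneg_on S f" "A \<subseteq> S" "B \<subseteq> S"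
  shows "f (A \<union> B) \<le> f A + f B"
proof -
  have "f (A \<union> B) + f (A \<inter> B) \<le> f A + f B"
    using assms unfolding submodular_on_def by blast
  moreover have "0 \<le> f (A \<inter> B)"
    using assms unfolding nonneg_on_def by blast
  ultimately show ?thesis by linarith
qed

lemma node_fun_subadditive:
  assumes "nonneg_on E f" "monotone_setfun_on E f" "submodular_on E f"
  shows "node_fun E f (A \<union> B) \<le> node_fun E f A + node_fun E f B"
proof -
  have "f (out_edges E (A \<union> B)) \<le> f (out_edges E A \<union> out_edges E B)"
    using assms(2) out_edges_Un_subset[of E A B] out_edges_subset[of E A] out_edges_subset[of E B]
    unfolding monotone_setfun_on_def by (meson Un_least)
  also have "\<dots> \<le> f (out_edges E A) + f (out_edges E B)"
    using assms(3,1) out_edges_subset out_edges_subset by (rule submodular_nonneg_subadditive)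
  finally show ?thesis unfolding node_fun_def .
qed

lemma node_fun_not_submodular_example:
  defines "V \<equiv> {0, 1, 2, 3 :: nat}"
    and "E \<equiv> {(0, 1), (2, 3)} :: (nat \<times> nat) set"
    and "f \<equiv> \<lambda>S :: (nat \<times> nat) set. if S = {} then 0 else 1 :: real"
  shows "finite V \<and> digraph V E \<and> normalized_on E f \<and> nonneg_on E f
    \<and> monotone_setfun_on E f \<and> submodular_on E f \<and> \<not> submodular_on V (node_fun E f)"
proof -
  have "out_edges E {0, 1} = {}" "out_edges E {0, 2} = E"
    "out_edges E ({0, 1} \<union> {0, 2}) = {(2, 3)}" "out_edges E ({0, 1} \<inter> {0, 2}) = {(0, 1)}"
    by (auto simp: E_def out_edges_def)
  then have "node_fun E f {0, 1} + node_fun E f {0, 2}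
      < node_fun E f ({0, 1} \<union> {0, 2}) + node_fun E f ({0, 1} \<inter> {0, 2})"
    by (simp add: node_fun_def f_def E_def)
  moreover have "{0, 1} \<subseteq> V" "{0, 2} \<subseteq> V"
    by (auto simp: V_def)
  ultimately have "\<not> submodular_on V (node_fun E f)"
    unfolding submodular_on_def by (meson not_le)
  moreover have "digraph V E"
    by (auto simp: digraph_def V_def E_def)
  moreover have "submodular_on E f"
    by (auto simp: submodular_on_def f_def)
  moreover have "monotone_setfun_on E f"
    by (auto simp: monotone_setfun_on_def f_def)
  ultimately show ?thesis
    by (simp add: V_def f_def normalized_on_def nonneg_on_def)
qed

theorem proposition1:
  shows "(\<exists>(V :: nat set) E f. finite V \<and> digraph V E \<and>
            normalized_on E f \<and> nonneg_on E f \<and> monotone_setfun_on E f \<and> submodular_on E f \<and>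
            \<not> submodular_on V (node_fun E f))
       \<and> (\<forall>(V :: 'v set) E f. digraph V E \<and>
            normalized_on E f \<and> nonneg_on E f \<and> monotone_setfun_on E f \<and> submodular_on E f \<longrightarrow>
            (\<forall>A B. A \<subseteq> V \<and> B \<subseteq> V \<longrightarrow>
               node_fun E f A + node_fun E f B \<ge> node_fun E f (A \<union> B)))"
proof (intro conjI allI impI)
  show "\<exists>(V :: nat set) E f. finite V \<and> digraph V E \<and>
            normalized_on E f \<and> nonneg_on E f \<and> monotone_setfun_on E f \<and> submodular_on E f \<and>
            \<not> submodular_on V (node_fun E f)"
    using node_fun_not_submodular_example by blast
qed (simp add: node_fun_subadditive)

end
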